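(* For every fixed integer $k\ge1$, as formal power series in $y$, \[ \sum_{n\ge0}q_{n,k}y^n=\frac{(2-y)y^{2k}}{(1-y-y^2)^{k+1}}+y\,\delta_{k1}, \] where $\delta$ is the Kronecker delta.
   Context: For $n\ge1$ let $\Xi_n$ be the poset on $\{x_1,\dots,x_n\}$ whose cover relations are exactly: $x_2\prec x_1$, $x_3\prec x_2$, and for $3\le i\le n-1$, $x_i\prec x_{i+1}$ if $i$ is odd and $x_{i+1}\prec x_i$ if $i$ is even (so $x_1>x_2>x_3<x_4>x_5<\cdots$). A filter of a poset is an up-closed subset. The matchable Lucas cube $\Omega_n$ is the graph whose vertices are the filters of $\Xi_n$, two filters adjacent iff one is obtained from the other by deleting a single element; $\Omega_0$ is the one-vertex graph. $q_{n,k}$ denotes the number of induced subgraphs of $\Omega_n$ isomorphic to the $k$-dimensional hypercube ($0$ if there are none). *)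

theory Defs
  imports Main "HOL-Computational_Algebra.Formal_Power_Series"
begin

text \<open>Element x_i of the poset Xi_n is represented by the natural number i, 1 \<le> i \<le> n.
  xi_cover n a b means x_a is covered by x_b (x_a \<prec> x_b).\<close>
definition xi_cover :: "nat \<Rightarrow> nat \<Rightarrow> nat \<Rightarrow> bool" where
  "xi_cover n a b \<longleftrightarrow>
     (a = 2 \<and> b = 1 \<and> 2 \<le> n) \<or>
     (a = 3 \<and> b = 2 \<and> 3 \<le> n) \<or>
     (3 \<le> a \<and> a \<le> n - 1 \<and> odd a \<and> b = a + 1) \<or>
     (3 \<le> b \<and> b \<le> n - 1 \<and> even b \<and> a = b + 1)"

definition xi_le :: "nat \<Rightarrow> nat \<Rightarrow> nat \<Rightarrow> bool" where
  "xi_le n = (xi_cover n)\<^sup>*\<^sup>*"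

definition xi_filter :: "nat \<Rightarrow> nat set \<Rightarrow> bool" where
  "xi_filter n F \<longleftrightarrow> F \<subseteq> {1..n} \<and> (\<forall>x y. x \<in> F \<longrightarrow> y \<in> {1..n} \<longrightarrow> xi_le n x y \<longrightarrow> y \<in> F)"

definition omega_vertices :: "nat \<Rightarrow> nat set set" where
  "omega_vertices n = {F. xi_filter n F}"

definition omega_adj :: "nat set \<Rightarrow> nat set \<Rightarrow> bool" where
  "omega_adj F G \<longleftrightarrow> (\<exists>x\<in>F. G = F - {x}) \<or> (\<exists>x\<in>G. F = G - {x})"

definition hypercube_adj :: "nat set \<Rightarrow> nat set \<Rightarrow> bool" where
  "hypercube_adj A B \<longleftrightarrow> card ((A - B) \<union> (B - A)) = 1"

definition q :: "nat \<Rightarrow> nat \<Rightarrow> nat" where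
  "q n k = card {S. S \<subseteq> omega_vertices n \<and>
     (\<exists>f. bij_betw f (Pow {..<k}) S \<and>
          (\<forall>A\<in>Pow {..<k}. \<forall>B\<in>Pow {..<k}. omega_adj (f A) (f B) \<longleftrightarrow> hypercube_adj A B))}"

end

theory Submission
  imports Defs
begin

text \<open>An induced k-cube of \<Omega>_n is a family of filters {L \<union> T | T \<subseteq> D} with L \<inter> D = {} and
  |D| = k: an adjacency-preserving injection of a hypercube into the hypercube of finite sets is a
  translate of a coordinate embedding. Such pairs (L, D) are counted by a transfer matrix along
  x_1, ..., x_n whose state records whether x_n lies in L, in D or in neither. As the zigzag
  alternates from x_3 on, two steps combine to P_(n+2) = P_(n+1) + (1 + x) P_n for n \<ge> 2, where
  P_n(x) is the sum of x^|D| over all pairs. Continued downwards by the values 2, 1 this recurrence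
  gives the series (2 - y) / (1 - y - y^2 - x y^2), whose coefficient of x^k is
  (2 - y) y^(2k) / (1 - y - y^2)^(k+1); the term y \<delta>_(k1) accounts for P_1 = 2 + x.\<close>

unbundle fps_syntax

section \<open>The zigzag poset\<close>

lemma xi_cover_in_range: "xi_cover n a b \<Longrightarrow> a \<in> {1..n} \<and> b \<in> {1..n}"
  unfolding xi_cover_def by auto

lemma xi_cover_irrefl: "\<not> xi_cover n a a"
  unfolding xi_cover_def by auto

lemma xi_filter_iff_cover_closed:
  "xi_filter n F \<longleftrightarrow> F \<subseteq> {1..n} \<and> (\<forall>a b. xi_cover n a b \<longrightarrow> a \<in> F \<longrightarrow> b \<in> F)"
proof
  assume "xi_filter n F"
  then show "F \<subseteq> {1..n} \<and> (\<forall>a b. xi_cover n a b \<longrightarrow> a \<in> F \<longrightarrow> b \<in> F)"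
    unfolding xi_filter_def xi_le_def using xi_cover_in_range by blast
next
  assume closed: "F \<subseteq> {1..n} \<and> (\<forall>a b. xi_cover n a b \<longrightarrow> a \<in> F \<longrightarrow> b \<in> F)"
  have "(xi_cover n)\<^sup>*\<^sup>* x y \<Longrightarrow> x \<in> F \<Longrightarrow> y \<in> F" for x y
    by (induction rule: rtranclp_induct) (use closed in auto)
  with closed show "xi_filter n F"
    unfolding xi_filter_def xi_le_def by blast
qed

text \<open>In \<Xi>_(n+1) the new element x_(n+1) lies below x_n if xi_descends n, above it otherwise.\<close>
definition xi_descends :: "nat \<Rightarrow> bool" where
  "xi_descends n \<longleftrightarrow> n \<le> 2 \<or> even n"

lemma xi_cover_Suc:
  "xi_cover (Suc n) a b \<longleftrightarrow> xi_cover n a b \<or>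
     (1 \<le> n \<and> (if xi_descends n then a = Suc n \<and> b = n else a = n \<and> b = Suc n))"
  unfolding xi_cover_def xi_descends_def
  by (rule iffI; elim disjE conjE; simp; presburger)

lemma xi_descends_alternates: "2 \<le> n \<Longrightarrow> xi_descends (Suc n) \<longleftrightarrow> \<not> xi_descends n"
  unfolding xi_descends_def by auto

section \<open>Embeddings of hypercubes\<close>

lemma hypercube_adj_iff: "hypercube_adj A B \<longleftrightarrow> (\<exists>x. sym_diff A B = {x})"
  unfolding hypercube_adj_def by (simp add: card_1_singleton_iff)

lemma sym_diff_eqD: "sym_diff A B = C \<Longrightarrow> B = sym_diff A C"
  by auto

lemma hypercube_adj_common_neighbour:
  assumes "u \<noteq> v" "hypercube_adj (sym_diff W {u}) Z" "hypercube_adj (sym_diff W {v}) Z"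
  shows "Z = W \<or> Z = sym_diff W {u, v}"
proof -
  from assms(2) obtain e1 where "sym_diff (sym_diff W {u}) Z = {e1}"
    unfolding hypercube_adj_iff ..
  then have Z1: "Z = sym_diff (sym_diff W {u}) {e1}" by (rule sym_diff_eqD)
  from assms(3) obtain e2 where "sym_diff (sym_diff W {v}) Z = {e2}"
    unfolding hypercube_adj_iff ..
  then have Z2: "Z = sym_diff (sym_diff W {v}) {e2}" by (rule sym_diff_eqD)
  show ?thesis
  proof (cases "e1 = u")
    case True
    with Z1 have "Z = W" by auto
    then show ?thesis ..
  next
    case False
    have "u \<in> Z \<longleftrightarrow> u \<notin> W" using Z1 False by auto
    moreover have "u \<in> Z \<longleftrightarrow> (u \<in> W \<longleftrightarrow> u \<noteq> e2)" using Z2 \<open>u \<noteq> v\<close> by auto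
    ultimately have "e2 = u" by blast
    have "v \<in> Z \<longleftrightarrow> v \<notin> W" using Z2 \<open>e2 = u\<close> \<open>u \<noteq> v\<close> by auto
    moreover have "v \<in> Z \<longleftrightarrow> (v \<in> W \<longleftrightarrow> v \<noteq> e1)" using Z1 \<open>u \<noteq> v\<close> by auto
    ultimately have "e1 = v" by blast
    with Z1 \<open>u \<noteq> v\<close> have "Z = sym_diff W {u, v}" by auto
    then show ?thesis ..
  qed
qed

text \<open>f A is a common neighbour of f (A - {i}) and f (A - {j}); the only other common neighbour
  is f (A - {i, j}), which injectivity rules out.\<close>
lemma hypercube_embedding_step:
  fixes f :: "nat set \<Rightarrow> nat set"
  assumes inj: "inj_on f (Pow K)"
    and adj: "\<And>A B. A \<subseteq> K \<Longrightarrow> B \<subseteq> K \<Longrightarrow> hypercube_adj A B \<Longrightarrow> hypercube_adj (f A) (f B)"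
    and "inj_on g K" "A \<subseteq> K" "i \<in> A" "j \<in> A" "i \<noteq> j"
    and IH: "\<And>B. B \<subset> A \<Longrightarrow> f B = sym_diff F (g ` B)"
  shows "f A = sym_diff F (g ` A)"
proof -
  define W where "W = sym_diff F (g ` A)"
  have "g i \<noteq> g j"
    using assms(3-7) by (auto dest: inj_onD)
  have remove: "f (A - X) = sym_diff W (g ` X)" if "X \<subseteq> {i, j}" "X \<noteq> {}" for X
  proof -
    have "g ` (A - X) = g ` A - g ` X"
      using that assms(3-6) by (intro inj_on_image_set_diff[of g K]) auto
    moreover have "g ` X \<subseteq> g ` A" "A - X \<subset> A"
      using that assms(5,6) by auto
    ultimately show ?thesis
      unfolding W_def by (auto simp: IH)
  qed
  have "hypercube_adj (sym_diff W {g x}) (f A)" if "x \<in> {i, j}" for x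
  proof -
    have "hypercube_adj (A - {x}) A"
      using that assms(5,6) unfolding hypercube_adj_iff by (auto intro!: exI[of _ x])
    then have "hypercube_adj (f (A - {x})) (f A)"
      using \<open>A \<subseteq> K\<close> by (intro adj) auto
    with remove[of "{x}"] that show ?thesis by simp
  qed
  then consider "f A = W" | "f A = sym_diff W {g i, g j}"
    using hypercube_adj_common_neighbour[OF \<open>g i \<noteq> g j\<close>] by blast
  then show ?thesis
  proof cases
    case 2
    then have "f A = f (A - {i, j})"
      using remove[of "{i, j}"] by simp
    moreover have "A \<noteq> A - {i, j}"
      using assms(5) by blast
    ultimately show ?thesis
      using inj \<open>A \<subseteq> K\<close> by (auto dest: inj_onD)
  qed (simp add: W_def)
qed

lemma hypercube_embedding_eq_sym_diff_image:
  fixes f :: "nat set \<Rightarrow> nat set"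
  assumes "finite K" and inj: "inj_on f (Pow K)"
    and adj: "\<And>A B. A \<subseteq> K \<Longrightarrow> B \<subseteq> K \<Longrightarrow> hypercube_adj A B \<Longrightarrow> hypercube_adj (f A) (f B)"
  obtains g where "inj_on g K" "\<And>A. A \<subseteq> K \<Longrightarrow> f A = sym_diff (f {}) (g ` A)"
proof -
  define g where "g i = (THE x. sym_diff (f {}) (f {i}) = {x})" for i
  have f_singleton: "f {i} = sym_diff (f {}) {g i}" if "i \<in> K" for i
  proof -
    have "hypercube_adj (f {}) (f {i})"
      using that by (intro adj) (auto simp: hypercube_adj_def)
    then obtain x where x: "sym_diff (f {}) (f {i}) = {x}"
      unfolding hypercube_adj_iff ..
    then have "g i = x"
      unfolding g_def by (rule the_equality) (use x in auto)
    with x show ?thesis by (auto dest: sym_diff_eqD)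
  qed
  have "inj_on g K"
  proof (rule inj_onI)
    fix i j assume "i \<in> K" "j \<in> K" "g i = g j"
    then have "f {i} = f {j}" by (simp add: f_singleton)
    with inj \<open>i \<in> K\<close> \<open>j \<in> K\<close> show "i = j"
      by (auto dest: inj_onD)
  qed
  have "A \<subseteq> K \<longrightarrow> f A = sym_diff (f {}) (g ` A)" if "finite A" for A
    using that
  proof (induction A rule: finite_psubset_induct)
    case (psubset A)
    show ?case
    proof
      assume "A \<subseteq> K"
      consider "A = {}" | i where "A = {i}" | i j where "i \<in> A" "j \<in> A" "i \<noteq> j"
        by blast
      then show "f A = sym_diff (f {}) (g ` A)"
      proof cases
        case (2 i)
        with \<open>A \<subseteq> K\<close> f_singleton show ?thesis by simp
      next
        case (3 i j)
        show ?thesis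
          by (rule hypercube_embedding_step[OF inj adj \<open>inj_on g K\<close> \<open>A \<subseteq> K\<close> 3])
            (use psubset.IH \<open>A \<subseteq> K\<close> in auto)
      qed simp
    qed
  qed
  with \<open>inj_on g K\<close> \<open>finite K\<close> that show thesis
    by (meson finite_subset)
qed

section \<open>Induced hypercubes of \<Omega>_n\<close>

lemma omega_adj_eq_hypercube_adj: "omega_adj = hypercube_adj"
proof (intro ext)
  fix X Y :: "nat set"
  have "omega_adj X Y \<longleftrightarrow> (\<exists>x. sym_diff X Y = {x})"
  proof
    assume "omega_adj X Y"
    then show "\<exists>x. sym_diff X Y = {x}"
      unfolding omega_adj_def by blast
  next
    assume "\<exists>x. sym_diff X Y = {x}"
    then obtain x where x: "sym_diff X Y = {x}" ..
    show "omega_adj X Y"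
    proof (cases "x \<in> X")
      case True
      with x have "Y = X - {x}" by blast
      with True show ?thesis unfolding omega_adj_def by blast
    next
      case False
      with x have "x \<in> Y" by (auto simp: set_eq_iff)
      moreover from x have "sym_diff Y X = {x}" by (simp add: Un_commute)
      ultimately have "X = Y - {x}" by blast
      with \<open>x \<in> Y\<close> show ?thesis unfolding omega_adj_def by blast
    qed
  qed
  then show "omega_adj X Y \<longleftrightarrow> hypercube_adj X Y"
    by (simp add: hypercube_adj_iff)
qed

definition cube_pair :: "nat \<Rightarrow> nat set \<Rightarrow> nat set \<Rightarrow> bool" where
  "cube_pair n L D \<longleftrightarrow> L \<inter> D = {} \<and> L \<union> D \<subseteq> {1..n} \<and>
     (\<forall>a b. xi_cover n a b \<longrightarrow> a \<in> L \<union> D \<longrightarrow> b \<in> L)"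

definition subcube :: "'a set \<Rightarrow> 'a set \<Rightarrow> 'a set set" where
  "subcube L D = (\<lambda>T. L \<union> T) ` Pow D"

lemma cube_pair_iff_filters:
  assumes "L \<inter> D = {}"
  shows "cube_pair n L D \<longleftrightarrow> subcube L D \<subseteq> omega_vertices n"
proof
  assume "cube_pair n L D"
  then show "subcube L D \<subseteq> omega_vertices n"
    unfolding cube_pair_def subcube_def omega_vertices_def xi_filter_iff_cover_closed by blast
next
  assume filters: "subcube L D \<subseteq> omega_vertices n"
  have filter: "xi_filter n (L \<union> T)" if "T \<subseteq> D" for T
    using filters that unfolding subcube_def omega_vertices_def by blast
  have "L \<union> D \<subseteq> {1..n}"
    using filter[of D] by (simp add: xi_filter_iff_cover_closed)
  moreover have "b \<in> L" if "xi_cover n a b" "a \<in> L \<union> D" for a b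
  proof -
    have "b \<in> L \<union> ({a} \<inter> D)"
      using filter[of "{a} \<inter> D"] that by (auto simp: xi_filter_iff_cover_closed)
    with that(1) show ?thesis
      using xi_cover_irrefl by blast
  qed
  ultimately show "cube_pair n L D"
    using assms unfolding cube_pair_def by blast
qed

lemma subcube_Inter_Union:
  assumes "L \<inter> D = {}"
  shows "\<Inter> (subcube L D) = L" "\<Union> (subcube L D) = L \<union> D"
  using assms unfolding subcube_def by auto

lemma inj_on_subcube: "inj_on (\<lambda>(L, D). subcube L D) {(L, D). L \<inter> D = {}}"
proof (rule inj_onI, clarify)
  fix L D L' D' :: "'a set"
  assume disj: "L \<inter> D = {}" "L' \<inter> D' = {}" and eq: "subcube L D = subcube L' D'"
  have "L = L'"
    using subcube_Inter_Union(1)[OF disj(1)] subcube_Inter_Union(1)[OF disj(2)] eq by simp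
  moreover have "L \<union> D = L' \<union> D'"
    using subcube_Inter_Union(2)[OF disj(1)] subcube_Inter_Union(2)[OF disj(2)] eq by simp
  ultimately show "L = L' \<and> D = D'"
    using disj by blast
qed

lemma sym_diff_image_Pow_eq_subcube:
  "(\<lambda>T. sym_diff F T) ` Pow D = subcube (F - D) D"
proof -
  let ?flip = "\<lambda>T. sym_diff (F \<inter> D) T"
  have flip_Pow: "?flip ` Pow D = Pow D"
  proof
    show "Pow D \<subseteq> ?flip ` Pow D"
    proof
      fix T assume "T \<in> Pow D"
      then have "T = ?flip (?flip T)" "?flip T \<in> Pow D" by auto
      then show "T \<in> ?flip ` Pow D" by (rule image_eqI)
    qed
  qed auto
  have "subcube (F - D) D = (\<lambda>T. (F - D) \<union> ?flip T) ` Pow D"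
    unfolding subcube_def by (subst flip_Pow[symmetric]) (simp add: image_image)
  also have "\<dots> = (\<lambda>T. sym_diff F T) ` Pow D"
    by (rule image_cong) auto
  finally show ?thesis ..
qed

definition omega_induced_cube :: "nat \<Rightarrow> nat \<Rightarrow> nat set set \<Rightarrow> bool" where
  "omega_induced_cube n k S \<longleftrightarrow> S \<subseteq> omega_vertices n \<and>
     (\<exists>f. bij_betw f (Pow {..<k}) S \<and>
          (\<forall>A\<in>Pow {..<k}. \<forall>B\<in>Pow {..<k}. omega_adj (f A) (f B) \<longleftrightarrow> hypercube_adj A B))"

lemma omega_induced_cube_imp_subcube:
  assumes "omega_induced_cube n k S"
  obtains L D where "cube_pair n L D" "card D = k" "S = subcube L D"
proof -
  obtain f where f: "bij_betw f (Pow {..<k}) S"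
    and adj: "\<forall>A\<in>Pow {..<k}. \<forall>B\<in>Pow {..<k}. hypercube_adj (f A) (f B) \<longleftrightarrow> hypercube_adj A B"
    using assms unfolding omega_induced_cube_def omega_adj_eq_hypercube_adj by blast
  have "inj_on f (Pow {..<k})"
    using f by (rule bij_betw_imp_inj_on)
  then obtain g where "inj_on g {..<k}" and f_eq: "\<And>A. A \<subseteq> {..<k} \<Longrightarrow> f A = sym_diff (f {}) (g ` A)"
    using hypercube_embedding_eq_sym_diff_image[of "{..<k}" f] adj by auto
  define D where "D = g ` {..<k}"
  define L where "L = f {} - D"
  have "S = f ` Pow {..<k}"
    using f by (simp add: bij_betw_def)
  also have "\<dots> = (\<lambda>A. sym_diff (f {}) (g ` A)) ` Pow {..<k}"
    by (rule image_cong[OF refl]) (rule f_eq, simp)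
  also have "\<dots> = (\<lambda>T. sym_diff (f {}) T) ` (image g ` Pow {..<k})"
    by (simp add: image_image)
  also have "\<dots> = subcube L D"
    unfolding L_def D_def image_Pow_surj[OF refl] by (rule sym_diff_image_Pow_eq_subcube)
  finally have S: "S = subcube L D" .
  have "card D = k"
    unfolding D_def using \<open>inj_on g {..<k}\<close> by (simp add: card_image)
  moreover have "L \<inter> D = {}"
    unfolding L_def by blast
  then have "cube_pair n L D"
    using assms S cube_pair_iff_filters unfolding omega_induced_cube_def by simp
  ultimately show thesis
    using S that by simp
qed

lemma card_sym_diff_union_image:
  assumes "L \<inter> h ` K = {}" "inj_on h K" "A \<subseteq> K" "B \<subseteq> K"
  shows "card (sym_diff (L \<union> h ` A) (L \<union> h ` B)) = card (sym_diff A B)"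
proof -
  have "sym_diff (L \<union> h ` A) (L \<union> h ` B) = sym_diff (h ` A) (h ` B)"
    using assms(1,3,4) by blast
  also have "\<dots> = h ` sym_diff A B"
    using inj_on_image_set_diff[OF assms(2), of A B] inj_on_image_set_diff[OF assms(2), of B A] assms(3,4)
    by (auto simp: image_Un)
  finally have "sym_diff (L \<union> h ` A) (L \<union> h ` B) = h ` sym_diff A B" .
  moreover have "inj_on h (sym_diff A B)"
    using assms(3,4) by (intro inj_on_subset[OF assms(2)]) auto
  ultimately show ?thesis
    by (simp add: card_image)
qed

lemma subcube_omega_induced_cube:
  assumes "cube_pair n L D" "card D = k"
  shows "omega_induced_cube n k (subcube L D)"
proof -
  have "L \<inter> D = {}" "finite D"
    using assms(1) unfolding cube_pair_def by (auto intro: finite_subset)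
  then obtain h where h: "bij_betw h {..<k} D"
    using ex_bij_betw_nat_finite[of D] assms(2) by (auto simp: atLeast0LessThan)
  define f where "f A = L \<union> h ` A" for A
  have "subcube L D \<subseteq> omega_vertices n"
    using assms(1) cube_pair_iff_filters[OF \<open>L \<inter> D = {}\<close>] by simp
  moreover have "bij_betw (\<lambda>T. L \<union> T) (Pow D) (subcube L D)"
    unfolding subcube_def using \<open>L \<inter> D = {}\<close> by (intro inj_on_imp_bij_betw inj_onI) blast
  then have "bij_betw f (Pow {..<k}) (subcube L D)"
    using bij_betw_trans[OF bij_betw_image_Pow[OF h]] unfolding f_def comp_def by simp
  moreover have "\<forall>A\<in>Pow {..<k}. \<forall>B\<in>Pow {..<k}. omega_adj (f A) (f B) \<longleftrightarrow> hypercube_adj A B"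
    using card_sym_diff_union_image[of L h "{..<k}"] h \<open>L \<inter> D = {}\<close>
    unfolding omega_adj_eq_hypercube_adj hypercube_adj_def f_def bij_betw_def by simp
  ultimately show ?thesis
    unfolding omega_induced_cube_def by blast
qed

lemma q_eq_card_cube_pairs: "q n k = card {(L, D). cube_pair n L D \<and> card D = k}"
proof -
  let ?P = "{(L, D). cube_pair n L D \<and> card D = k}"
  have "{S. omega_induced_cube n k S} = (\<lambda>(L, D). subcube L D) ` ?P"
  proof (intro set_eqI iffI)
    fix S assume "S \<in> {S. omega_induced_cube n k S}"
    then obtain L D where "cube_pair n L D" "card D = k" "S = subcube L D"
      using omega_induced_cube_imp_subcube by blast
    then show "S \<in> (\<lambda>(L, D). subcube L D) ` ?P"
      by (auto intro!: image_eqI[where x = "(L, D)"])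
  next
    fix S assume "S \<in> (\<lambda>(L, D). subcube L D) ` ?P"
    then show "S \<in> {S. omega_induced_cube n k S}"
      using subcube_omega_induced_cube by auto
  qed
  moreover have "inj_on (\<lambda>(L, D). subcube L D) ?P"
    by (rule inj_on_subset[OF inj_on_subcube]) (auto simp: cube_pair_def)
  ultimately show ?thesis
    unfolding q_def omega_induced_cube_def[symmetric] by (simp add: card_image)
qed

section \<open>Transfer matrix\<close>

text \<open>The role of an element for a pair (L, D): it lies in L, i.e. in every vertex of
  subcube L D (Fixed), in D, i.e. it is a direction of the cube (Free), or in neither (Absent).\<close>
datatype role = Absent | Fixed | Free

lemma UNIV_role: "UNIV = {Absent, Fixed, Free}"
  using role.exhaust by auto

instance role :: finite
  by standard (simp add: UNIV_role)

definition role_of :: "nat \<Rightarrow> nat set \<times> nat set \<Rightarrow> role" where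
  "role_of i p = (if i \<in> fst p then Fixed else if i \<in> snd p then Free else Absent)"

text \<open>The cover between x_n and x_(n+1) forces its upper end into L as soon as its lower end
  lies in L \<union> D.\<close>
definition roles_compatible :: "nat \<Rightarrow> role \<Rightarrow> role \<Rightarrow> bool" where
  "roles_compatible n r r' \<longleftrightarrow> n = 0 \<or>
     (if xi_descends n then r' \<noteq> Absent \<longrightarrow> r = Fixed else r \<noteq> Absent \<longrightarrow> r' = Fixed)"

definition cube_pairs :: "nat \<Rightarrow> (nat set \<times> nat set) set" where
  "cube_pairs n = {(L, D). cube_pair n L D}"

lemma mem_cube_pairs [simp]: "(L, D) \<in> cube_pairs n \<longleftrightarrow> cube_pair n L D"
  by (simp add: cube_pairs_def)

lemma finite_cube_pairs: "finite (cube_pairs n)"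
proof (rule finite_subset)
  show "cube_pairs n \<subseteq> Pow {1..n} \<times> Pow {1..n}"
    unfolding cube_pairs_def cube_pair_def by auto
qed auto

lemma Suc_notin_cube_pair: "cube_pair n L D \<Longrightarrow> Suc n \<notin> L"
  "cube_pair n L D \<Longrightarrow> Suc n \<notin> D"
  unfolding cube_pair_def by auto

definition extend_pair :: "nat \<Rightarrow> role \<Rightarrow> nat set \<times> nat set \<Rightarrow> nat set \<times> nat set" where
  "extend_pair n r p = (if r = Fixed then insert (Suc n) (fst p) else fst p,
                        if r = Free then insert (Suc n) (snd p) else snd p)"

definition truncate_pair :: "nat \<Rightarrow> nat set \<times> nat set \<Rightarrow> nat set \<times> nat set" where
  "truncate_pair n p = (fst p - {Suc n}, snd p - {Suc n})"

lemma cube_pair_Suc_iff: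
  "cube_pair (Suc n) L D \<longleftrightarrow>
     L \<inter> D = {} \<and> L \<union> D \<subseteq> {1..Suc n} \<and> truncate_pair n (L, D) \<in> cube_pairs n \<and>
     roles_compatible n (role_of n (L, D)) (role_of (Suc n) (L, D))"
proof -
  have "a \<noteq> Suc n \<and> b \<noteq> Suc n" if "xi_cover n a b" for a b
    using xi_cover_in_range[OF that] by simp
  then have old: "(\<forall>a b. xi_cover n a b \<longrightarrow> a \<in> L \<union> D \<longrightarrow> b \<in> L) \<longleftrightarrow>
      (\<forall>a b. xi_cover n a b \<longrightarrow> a \<in> (L - {Suc n}) \<union> (D - {Suc n}) \<longrightarrow> b \<in> L - {Suc n})"
    by blast
  have new: "(\<forall>a b. 1 \<le> n \<and> (if xi_descends n then a = Suc n \<and> b = n else a = n \<and> b = Suc n)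
        \<longrightarrow> a \<in> L \<union> D \<longrightarrow> b \<in> L) \<longleftrightarrow> roles_compatible n (role_of n (L, D)) (role_of (Suc n) (L, D))"
    unfolding roles_compatible_def role_of_def by auto
  have covers: "(\<forall>a b. xi_cover (Suc n) a b \<longrightarrow> a \<in> L \<union> D \<longrightarrow> b \<in> L) \<longleftrightarrow>
      (\<forall>a b. xi_cover n a b \<longrightarrow> a \<in> (L - {Suc n}) \<union> (D - {Suc n}) \<longrightarrow> b \<in> L - {Suc n}) \<and>
      roles_compatible n (role_of n (L, D)) (role_of (Suc n) (L, D))"
    unfolding xi_cover_Suc old[symmetric] new[symmetric] by blast
  have "L \<union> D \<subseteq> {1..Suc n} \<Longrightarrow> (L - {Suc n}) \<union> (D - {Suc n}) \<subseteq> {1..n}"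
    by auto
  moreover have "L \<inter> D = {} \<Longrightarrow> (L - {Suc n}) \<inter> (D - {Suc n}) = {}"
    by blast
  ultimately show ?thesis
    unfolding cube_pair_def covers truncate_pair_def mem_cube_pairs fst_conv snd_conv by argo
qed

lemma role_of_Suc_extend_pair: "p \<in> cube_pairs n \<Longrightarrow> role_of (Suc n) (extend_pair n r p) = r"
  by (cases p; cases r) (auto simp: role_of_def extend_pair_def Suc_notin_cube_pair)

lemma role_of_extend_pair: "role_of n (extend_pair n r p) = role_of n p"
  by (simp add: role_of_def extend_pair_def)

lemma truncate_extend_pair: "p \<in> cube_pairs n \<Longrightarrow> truncate_pair n (extend_pair n r p) = p"
  by (cases p) (auto simp: truncate_pair_def extend_pair_def Suc_notin_cube_pair)

lemma extend_truncate_pair: "L \<inter> D = {} \<Longrightarrow> extend_pair n (role_of (Suc n) (L, D)) (truncate_pair n (L, D)) = (L, D)"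
  by (auto simp: truncate_pair_def extend_pair_def role_of_def)

lemma role_of_truncate_pair: "role_of n (truncate_pair n p) = role_of n p"
  by (simp add: role_of_def truncate_pair_def)

lemma extend_pair_mem_cube_pairs:
  assumes "p \<in> cube_pairs n" "roles_compatible n (role_of n p) r"
  shows "extend_pair n r p \<in> cube_pairs (Suc n)"
proof -
  obtain L' D' where ext: "extend_pair n r p = (L', D')" by fastforce
  have "L' \<inter> D' = {}" "L' \<union> D' \<subseteq> {1..Suc n}"
    using assms(1) ext unfolding extend_pair_def cube_pairs_def cube_pair_def by (auto split: if_splits)
  moreover have "truncate_pair n (L', D') = p" "role_of (Suc n) (L', D') = r" "role_of n (L', D') = role_of n p"
    unfolding ext[symmetric] using assms(1)
    by (simp_all add: truncate_extend_pair role_of_Suc_extend_pair role_of_extend_pair)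
  ultimately show ?thesis
    using assms unfolding ext by (simp add: cube_pair_Suc_iff)
qed

lemma truncate_pair_mem_cube_pairs:
  assumes "p \<in> cube_pairs (Suc n)"
  shows "truncate_pair n p \<in> cube_pairs n" "roles_compatible n (role_of n (truncate_pair n p)) (role_of (Suc n) p)"
  using assms by (cases p; simp add: cube_pair_Suc_iff role_of_truncate_pair)+

lemma bij_betw_extend_pair:
  "bij_betw (\<lambda>(p, r). extend_pair n r p)
     {(p, r). p \<in> cube_pairs n \<and> roles_compatible n (role_of n p) r} (cube_pairs (Suc n))"
proof (rule bij_betw_byWitness[where f' = "\<lambda>p. (truncate_pair n p, role_of (Suc n) p)"], goal_cases)
  case 1
  show ?case
    by (auto simp: truncate_extend_pair role_of_Suc_extend_pair)
next
  case 2
  show ?case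
    by (auto simp: cube_pair_def extend_truncate_pair)
next
  case 3
  show ?case
    using extend_pair_mem_cube_pairs by auto
next
  case 4
  show ?case
    using truncate_pair_mem_cube_pairs by auto
qed

definition cube_poly :: "nat \<Rightarrow> rat fps" where
  "cube_poly n = (\<Sum>p\<in>cube_pairs n. fps_X ^ card (snd p))"

definition cube_poly_role :: "nat \<Rightarrow> role \<Rightarrow> rat fps" where
  "cube_poly_role n r = (\<Sum>p\<in>cube_pairs n. if role_of n p = r then fps_X ^ card (snd p) else 0)"

lemma sum_cube_poly_role:
  "(\<Sum>r | P r. cube_poly_role n r) = (\<Sum>p\<in>cube_pairs n. if P (role_of n p) then fps_X ^ card (snd p) else 0)"
  unfolding cube_poly_role_def by (subst sum.swap) (simp add: sum.delta')

lemma cube_poly_eq_sum_role: "cube_poly n = (\<Sum>r\<in>UNIV. cube_poly_role n r)"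
  using sum_cube_poly_role[where P = "\<lambda>_. True"] by (simp add: cube_poly_def)

lemma cube_poly_by_roles:
  "cube_poly n = cube_poly_role n Absent + cube_poly_role n Fixed + cube_poly_role n Free"
  by (simp add: cube_poly_eq_sum_role UNIV_role)

lemma card_snd_extend_pair:
  "p \<in> cube_pairs n \<Longrightarrow> card (snd (extend_pair n r p)) = card (snd p) + (if r = Free then 1 else 0)"
proof (cases p)
  case (Pair L D)
  moreover assume "p \<in> cube_pairs n"
  ultimately have "finite D" "Suc n \<notin> D"
    by (auto simp: cube_pair_def Suc_notin_cube_pair intro: finite_subset)
  with Pair show ?thesis
    by (simp add: extend_pair_def)
qed

lemma cube_poly_role_Suc:
  "cube_poly_role (Suc n) r' =
     (if r' = Free then fps_X else 1) * (\<Sum>r | roles_compatible n r r'. cube_poly_role n r)"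
proof -
  let ?E = "{(p, r). p \<in> cube_pairs n \<and> roles_compatible n (role_of n p) r}"
  let ?w = "\<lambda>q. if role_of (Suc n) q = r' then fps_X ^ card (snd q) else (0 :: rat fps)"
  have E: "?E = Sigma (cube_pairs n) (\<lambda>p. {r. roles_compatible n (role_of n p) r})"
    by auto
  have "cube_poly_role (Suc n) r' = (\<Sum>(p, r)\<in>?E. ?w (extend_pair n r p))"
    unfolding cube_poly_role_def sum.reindex_bij_betw[OF bij_betw_extend_pair, symmetric]
    by (intro sum.cong refl) auto
  also have "\<dots> = (\<Sum>p\<in>cube_pairs n. \<Sum>r | roles_compatible n (role_of n p) r. ?w (extend_pair n r p))"
    unfolding E by (rule sum.Sigma[symmetric]) (simp_all add: finite_cube_pairs)
  also have "\<dots> = (\<Sum>p\<in>cube_pairs n. if roles_compatible n (role_of n p) r'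
      then fps_X ^ (card (snd p) + (if r' = Free then 1 else 0)) else 0)"
    by (intro sum.cong refl) (simp add: role_of_Suc_extend_pair card_snd_extend_pair sum.delta)
  also have "\<dots> = (if r' = Free then fps_X else 1) *
      (\<Sum>p\<in>cube_pairs n. if roles_compatible n (role_of n p) r' then fps_X ^ card (snd p) else 0)"
    by (auto simp: sum_distrib_left intro!: sum.cong)
  finally show ?thesis
    by (simp add: sum_cube_poly_role)
qed

lemma cube_pairs_0: "cube_pairs 0 = {({}, {})}"
  by (auto simp: cube_pairs_def cube_pair_def xi_cover_def)

lemma cube_poly_role_0: "cube_poly_role 0 r = (if r = Absent then 1 else 0)"
  by (simp add: cube_poly_role_def cube_pairs_0 role_of_def)

lemma cube_poly_role_Suc_descends:
  assumes "1 \<le> n" "xi_descends n"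
  shows "cube_poly_role (Suc n) Absent = cube_poly n"
    and "cube_poly_role (Suc n) Fixed = cube_poly_role n Fixed"
    and "cube_poly_role (Suc n) Free = fps_X * cube_poly_role n Fixed"
proof -
  have "{r. roles_compatible n r Absent} = UNIV" "{r. roles_compatible n r Fixed} = {Fixed}"
    "{r. roles_compatible n r Free} = {Fixed}"
    using assms by (auto simp: roles_compatible_def)
  then show "cube_poly_role (Suc n) Absent = cube_poly n"
    and "cube_poly_role (Suc n) Fixed = cube_poly_role n Fixed"
    and "cube_poly_role (Suc n) Free = fps_X * cube_poly_role n Fixed"
    by (simp_all add: cube_poly_role_Suc cube_poly_eq_sum_role)
qed

lemma cube_poly_role_Suc_ascends:
  assumes "1 \<le> n" "\<not> xi_descends n"
  shows "cube_poly_role (Suc n) Absent = cube_poly_role n Absent"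
    and "cube_poly_role (Suc n) Fixed = cube_poly n"
    and "cube_poly_role (Suc n) Free = fps_X * cube_poly_role n Absent"
proof -
  have "{r. roles_compatible n r Absent} = {Absent}" "{r. roles_compatible n r Fixed} = UNIV"
    "{r. roles_compatible n r Free} = {Absent}"
    using assms by (auto simp: roles_compatible_def)
  then show "cube_poly_role (Suc n) Absent = cube_poly_role n Absent"
    and "cube_poly_role (Suc n) Fixed = cube_poly n"
    and "cube_poly_role (Suc n) Free = fps_X * cube_poly_role n Absent"
    by (simp_all add: cube_poly_role_Suc cube_poly_eq_sum_role)
qed

lemma cube_poly_Suc_Suc:
  assumes "2 \<le> n"
  shows "cube_poly (Suc (Suc n)) = cube_poly (Suc n) + (1 + fps_X) * cube_poly n"
proof (cases "xi_descends n")
  case True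
  with assms have "\<not> xi_descends (Suc n)"
    using xi_descends_alternates by blast
  with True assms show ?thesis
    using cube_poly_role_Suc_descends[of n] cube_poly_role_Suc_ascends[of "Suc n"]
    by (simp add: cube_poly_by_roles algebra_simps)
next
  case False
  with assms have "xi_descends (Suc n)"
    using xi_descends_alternates by blast
  with False assms show ?thesis
    using cube_poly_role_Suc_ascends[of n] cube_poly_role_Suc_descends[of "Suc n"]
    by (simp add: cube_poly_by_roles algebra_simps)
qed

lemma cube_poly_initial:
  "cube_poly 0 = 1" "cube_poly 1 = 2 + fps_X" "cube_poly 2 = 3 + 2 * fps_X" "cube_poly 3 = 4 + 3 * fps_X"
proof -
  have "xi_descends 1" "xi_descends 2"
    by (simp_all add: xi_descends_def)
  have role1: "cube_poly_role (Suc 0) r = (if r = Free then fps_X else 1)" for r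
    using cube_poly_role_Suc[of 0 r] by (simp add: roles_compatible_def UNIV_role cube_poly_role_0)
  show "cube_poly 0 = 1"
    by (simp add: cube_poly_by_roles cube_poly_role_0)
  show c1: "cube_poly 1 = 2 + fps_X"
    by (simp add: cube_poly_by_roles role1)
  have role2: "cube_poly_role 2 Absent = 2 + fps_X" "cube_poly_role 2 Fixed = 1"
    "cube_poly_role 2 Free = fps_X"
    using cube_poly_role_Suc_descends[of 1] \<open>xi_descends 1\<close> c1 role1
    by (simp_all add: numeral_2_eq_2)
  then show c2: "cube_poly 2 = 3 + 2 * fps_X"
    by (simp add: cube_poly_by_roles)
  show "cube_poly 3 = 4 + 3 * fps_X"
    using cube_poly_role_Suc_descends[of 2] \<open>xi_descends 2\<close> c2 role2
    by (simp add: numeral_3_eq_3 cube_poly_by_roles)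
qed

lemma of_nat_q_eq_cube_poly_nth: "of_nat (q n k) = cube_poly n $ k"
proof -
  have "cube_poly n $ k = (\<Sum>p\<in>cube_pairs n. if card (snd p) = k then 1 else 0)"
    unfolding cube_poly_def fps_sum_nth by (intro sum.cong refl) simp
  also have "\<dots> = of_nat (card {p \<in> cube_pairs n. card (snd p) = k})"
    by (simp add: finite_cube_pairs sum.inter_filter[symmetric])
  also have "{p \<in> cube_pairs n. card (snd p) = k} = {(L, D). cube_pair n L D \<and> card D = k}"
    by (auto simp: cube_pairs_def)
  finally show ?thesis
    by (simp add: q_eq_card_cube_pairs)
qed

section \<open>Generating functions\<close>

text \<open>The initial values 2, 1 are those for which the recurrence of cube_poly, valid from n = 2 on,
  holds for all n.\<close>
fun lucas_poly :: "nat \<Rightarrow> rat fps" where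
  "lucas_poly 0 = 2"
| "lucas_poly (Suc 0) = 1"
| "lucas_poly (Suc (Suc n)) = lucas_poly (Suc n) + (1 + fps_X) * lucas_poly n"

lemma lucas_poly_2_3: "lucas_poly 2 = 3 + 2 * fps_X" "lucas_poly 3 = 4 + 3 * fps_X"
  by (simp_all add: numeral_2_eq_2 numeral_3_eq_3 algebra_simps)

lemma cube_poly_eq_lucas_poly: "2 \<le> n \<Longrightarrow> cube_poly n = lucas_poly n"
proof (induction n rule: less_induct)
  case (less n)
  consider "n = 2" | "n = 3" | m where "n = Suc (Suc m)" "2 \<le> m"
    using less.prems by (metis add_2_eq_Suc le_Suc_eq le_add_diff_inverse numeral_2_eq_2 numeral_3_eq_3)
  then show ?case
  proof cases
    case 1
    then show ?thesis
      by (simp add: cube_poly_initial lucas_poly_2_3)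
  next
    case 2
    then show ?thesis
      by (simp add: cube_poly_initial lucas_poly_2_3)
  next
    case (3 m)
    then show ?thesis
      using less.IH[of m] less.IH[of "Suc m"] by (simp add: cube_poly_Suc_Suc)
  qed
qed

lemma of_nat_q_eq_lucas_poly_nth:
  assumes "1 \<le> k"
  shows "of_nat (q n k) = lucas_poly n $ k + (if n = 1 \<and> k = 1 then 1 else 0)"
proof -
  consider "n = 0" | "n = 1" | "2 \<le> n" by linarith
  then show ?thesis
  proof cases
    case 1
    with assms show ?thesis
      using cube_poly_initial(1) by (simp add: of_nat_q_eq_cube_poly_nth fps_numeral_nth)
  next
    case 2
    with assms show ?thesis
      using cube_poly_initial(2) by (simp add: of_nat_q_eq_cube_poly_nth fps_X_nth fps_numeral_nth)
  next
    case 3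
    then show ?thesis
      by (simp add: of_nat_q_eq_cube_poly_nth cube_poly_eq_lucas_poly)
  qed
qed

lemma fib_denominator_mult_nth:
  fixes f :: "'a::comm_ring_1 fps"
  shows "((1 - fps_X - fps_X ^ 2) * f) $ 0 = f $ 0"
    and "((1 - fps_X - fps_X ^ 2) * f) $ Suc 0 = f $ Suc 0 - f $ 0"
    and "((1 - fps_X - fps_X ^ 2) * f) $ Suc (Suc n) = f $ Suc (Suc n) - f $ Suc n - f $ n"
proof -
  have "(1 - fps_X - fps_X ^ 2) * f = f - fps_X * f - fps_X ^ 2 * f"
    by (simp add: algebra_simps)
  then show "((1 - fps_X - fps_X ^ 2) * f) $ 0 = f $ 0"
    and "((1 - fps_X - fps_X ^ 2) * f) $ Suc 0 = f $ Suc 0 - f $ 0"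
    and "((1 - fps_X - fps_X ^ 2) * f) $ Suc (Suc n) = f $ Suc (Suc n) - f $ Suc n - f $ n"
    by (simp_all add: fps_X_power_mult_nth)
qed

lemma one_plus_X_mult_nth:
  fixes p :: "'a::comm_ring_1 fps"
  shows "((1 + fps_X) * p) $ 0 = p $ 0" "((1 + fps_X) * p) $ Suc k = p $ Suc k + p $ k"
  by (simp_all add: distrib_right)

definition lucas_coeff_fps :: "nat \<Rightarrow> rat fps" where
  "lucas_coeff_fps k = Abs_fps (\<lambda>n. lucas_poly n $ k)"

lemma lucas_coeff_fps_0: "(1 - fps_X - fps_X ^ 2) * lucas_coeff_fps 0 = 2 - fps_X"
proof (rule fps_ext)
  fix n
  show "((1 - fps_X - fps_X ^ 2) * lucas_coeff_fps 0) $ n = (2 - fps_X) $ n"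
    by (cases n rule: lucas_poly.cases)
      (simp_all add: fib_denominator_mult_nth lucas_coeff_fps_def one_plus_X_mult_nth fps_numeral_nth)
qed

lemma lucas_coeff_fps_Suc: "(1 - fps_X - fps_X ^ 2) * lucas_coeff_fps (Suc k) = fps_X ^ 2 * lucas_coeff_fps k"
proof (rule fps_ext)
  fix n
  show "((1 - fps_X - fps_X ^ 2) * lucas_coeff_fps (Suc k)) $ n = (fps_X ^ 2 * lucas_coeff_fps k) $ n"
    by (cases n rule: lucas_poly.cases)
      (simp_all add: fib_denominator_mult_nth lucas_coeff_fps_def one_plus_X_mult_nth fps_numeral_nth
        fps_X_power_mult_nth)
qed

lemma lucas_coeff_fps_closed_form:
  "(1 - fps_X - fps_X ^ 2) ^ (k + 1) * lucas_coeff_fps k = (2 - fps_X) * fps_X ^ (2 * k)"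
proof (induction k)
  case 0
  then show ?case by (simp add: lucas_coeff_fps_0)
next
  case (Suc k)
  have "(1 - fps_X - fps_X ^ 2) ^ (Suc k + 1) * lucas_coeff_fps (Suc k) =
      (1 - fps_X - fps_X ^ 2) ^ (k + 1) * ((1 - fps_X - fps_X ^ 2) * lucas_coeff_fps (Suc k))"
    by (simp only: add_Suc power_Suc mult_ac)
  also have "\<dots> = fps_X ^ 2 * ((1 - fps_X - fps_X ^ 2) ^ (k + 1) * lucas_coeff_fps k)"
    unfolding lucas_coeff_fps_Suc by (simp only: mult_ac)
  also have "\<dots> = fps_X ^ 2 * ((2 - fps_X) * fps_X ^ (2 * k))"
    by (simp only: Suc.IH)
  also have "\<dots> = (2 - fps_X) * fps_X ^ (2 * Suc k)"
    by (simp add: power_add[symmetric] mult.left_commute)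
  finally show ?case .
qed

theorem mainTheorem12:
  fixes k :: nat
  assumes "k \<ge> 1"
  shows "Abs_fps (\<lambda>n. of_nat (q n k) :: rat) =
         (2 - fps_X) * fps_X ^ (2 * k) / (1 - fps_X - fps_X ^ 2) ^ (k + 1)
         + (if k = 1 then fps_X else 0)"
proof -
  have "Abs_fps (\<lambda>n. of_nat (q n k) :: rat) = lucas_coeff_fps k + (if k = 1 then fps_X else 0)"
    using assms by (intro fps_ext) (auto simp: of_nat_q_eq_lucas_poly_nth lucas_coeff_fps_def fps_X_nth)
  moreover have "lucas_coeff_fps k = (2 - fps_X) * fps_X ^ (2 * k) / (1 - fps_X - fps_X ^ 2) ^ (k + 1)"
  proof (subst unit_eq_div2)
    show "is_unit ((1 - fps_X - fps_X ^ 2) ^ (k + 1) :: rat fps)"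
      by (simp add: fps_nth_power_0)
    show "lucas_coeff_fps k * (1 - fps_X - fps_X ^ 2) ^ (k + 1) = (2 - fps_X) * fps_X ^ (2 * k)"
      using lucas_coeff_fps_closed_form[of k] by (simp only: mult.commute)
  qed
  ultimately show ?thesis
    by simp
qed

end
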